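(* Let $G=(m,n,\boldsymbol{c},\boldsymbol{d},r_{\max},r_{\min})$ be an interbank lending game and let $\boldsymbol{s}^*$ be its pure Nash equilibrium. Then the interest rates offered by the borrowers at $\boldsymbol{s}^*$ are identical: $r_j(\boldsymbol{s}^* )=r_{j'}(\boldsymbol{s}^* )$ for all $j,j'\in B$.
   Context: An interbank lending game $G=(m,n,\boldsymbol{c},\boldsymbol{d},r_{\max},r_{\min})$ consists of positive integers $m,n$, budgets $\boldsymbol{c}\in\mathbb{R}_{>0}^m$, demands $\boldsymbol{d}\in\mathbb{R}_{>0}^n$ and reals $0<r_{\min}<r_{\max}$. The players are the lenders $L=\{1,\dots,m\}$; $B=\{1,\dots,n\}$ is the set of borrowers. Lender $i$'s strategy set is $S_i=\{s_i\in\mathbb{R}_{\ge0}^n:\sum_{j\in B}s_{ij}\le c_i\}$, the strategy space is $\boldsymbol{S}=\prod_{i\in L}S_i$ with elements $\boldsymbol{s}=(s_{ij})$. The interest rate of borrower $j$ is $r_j(\boldsymbol{s})=(r_{\min}-r_{\max})\frac{\sum_{i\in L}s_{ij}}{d_j}+r_{\max}$ and lender $i$'s utility is $u_i(\boldsymbol{s})=\sum_{j\in B}(r_j(\boldsymbol{s})-r_{\min})s_{ij}$. A pure Nash equilibrium is $\boldsymbol{s}^*\in\boldsymbol{S}$ with $u_i(\boldsymbol{s}^* )\ge u_i(s_i,\boldsymbol{s}^*_{-i})$ for all $i\in L$, $s_i\in S_i$ (such a game has exactly one pure Nash equilibrium). *)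

theory Defs
  imports Complex_Main
begin

(* Lenders are {1..m}, borrowers are {1..n}. A strategy profile is s :: nat => nat => real,
   s i j = amount lender i lends to borrower j. Entries outside the index ranges are irrelevant. *)

definition is_game :: "nat \<Rightarrow> nat \<Rightarrow> (nat \<Rightarrow> real) \<Rightarrow> (nat \<Rightarrow> real) \<Rightarrow> real \<Rightarrow> real \<Rightarrow> bool" where
  "is_game m n c d rmax rmin \<longleftrightarrow> m > 0 \<and> n > 0 \<and> (\<forall>i\<in>{1..m}. c i > 0) \<and>
     (\<forall>j\<in>{1..n}. d j > 0) \<and> 0 < rmin \<and> rmin < rmax"

definition strategy_set :: "nat \<Rightarrow> (nat \<Rightarrow> real) \<Rightarrow> nat \<Rightarrow> (nat \<Rightarrow> real) set" where
  "strategy_set n c i = {si. (\<forall>j\<in>{1..n}. si j \<ge> 0) \<and> (\<Sum>j\<in>{1..n}. si j) \<le> c i}"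

definition profile_space :: "nat \<Rightarrow> nat \<Rightarrow> (nat \<Rightarrow> real) \<Rightarrow> (nat \<Rightarrow> nat \<Rightarrow> real) set" where
  "profile_space m n c = {s. \<forall>i\<in>{1..m}. s i \<in> strategy_set n c i}"

definition rate :: "nat \<Rightarrow> (nat \<Rightarrow> real) \<Rightarrow> real \<Rightarrow> real \<Rightarrow> (nat \<Rightarrow> nat \<Rightarrow> real) \<Rightarrow> nat \<Rightarrow> real" where
  "rate m d rmax rmin s j = (rmin - rmax) * (\<Sum>i\<in>{1..m}. s i j) / d j + rmax"

definition utility :: "nat \<Rightarrow> nat \<Rightarrow> (nat \<Rightarrow> real) \<Rightarrow> real \<Rightarrow> real \<Rightarrow> (nat \<Rightarrow> nat \<Rightarrow> real) \<Rightarrow> nat \<Rightarrow> real" where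
  "utility m n d rmax rmin s i = (\<Sum>j\<in>{1..n}. (rate m d rmax rmin s j - rmin) * s i j)"

definition pure_NE :: "nat \<Rightarrow> nat \<Rightarrow> (nat \<Rightarrow> real) \<Rightarrow> (nat \<Rightarrow> real) \<Rightarrow> real \<Rightarrow> real \<Rightarrow> (nat \<Rightarrow> nat \<Rightarrow> real) \<Rightarrow> bool" where
  "pure_NE m n c d rmax rmin s \<longleftrightarrow> s \<in> profile_space m n c \<and>
     (\<forall>i\<in>{1..m}. \<forall>si\<in>strategy_set n c i.
        utility m n d rmax rmin s i \<ge> utility m n d rmax rmin (s(i := si)) i)"

end

theory Submission
  imports Defs
begin

text \<open>Shifting an amount \<open>e\<close> of lender \<open>k\<close>'s loans from borrower \<open>j'\<close> to borrower \<open>j\<close> changes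
  \<open>k\<close>'s utility by \<open>e (\<mu>\<^sub>j - \<mu>\<^sub>j') - O(e\<^sup>2)\<close>, where \<open>\<mu>\<^sub>l = r\<^sub>l - r\<^sub>m\<^sub>i\<^sub>n - (r\<^sub>m\<^sub>a\<^sub>x - r\<^sub>m\<^sub>i\<^sub>n) s\<^sub>k\<^sub>l / d\<^sub>l\<close> is
  \<open>k\<close>'s marginal utility for lending to \<open>l\<close>. Hence at an equilibrium \<open>\<mu>\<^sub>j \<le> \<mu>\<^sub>j'\<close> whenever
  \<open>s\<^sub>k\<^sub>j' > 0\<close>. If \<open>r\<^sub>j > r\<^sub>j'\<close>, this forces \<open>s\<^sub>k\<^sub>j' / d\<^sub>j' \<le> s\<^sub>k\<^sub>j / d\<^sub>j\<close> for every lender, strictly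
  for some; summing over lenders gives \<open>\<Sum>\<^sub>i s\<^sub>i\<^sub>j' / d\<^sub>j' < \<Sum>\<^sub>i s\<^sub>i\<^sub>j / d\<^sub>j\<close>, i.e. \<open>r\<^sub>j' > r\<^sub>j\<close>.\<close>

definition marginal_utility ::
    "nat \<Rightarrow> (nat \<Rightarrow> real) \<Rightarrow> real \<Rightarrow> real \<Rightarrow> (nat \<Rightarrow> nat \<Rightarrow> real) \<Rightarrow> nat \<Rightarrow> nat \<Rightarrow> real" where
  "marginal_utility m d rmax rmin s k l =
     rate m d rmax rmin s l - rmin - (rmax - rmin) * s k l / d l"

definition shift_loan ::
    "(nat \<Rightarrow> nat \<Rightarrow> real) \<Rightarrow> nat \<Rightarrow> nat \<Rightarrow> nat \<Rightarrow> real \<Rightarrow> nat \<Rightarrow> nat \<Rightarrow> real" where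
  "shift_loan s k j j' e = s(k := (s k)(j := s k j + e, j' := s k j' - e))"

lemma linear_coeff_nonpos_if_quadratic_nonpos:
  fixes K Q y :: real
  assumes "y > 0" and "\<And>e. 0 < e \<Longrightarrow> e \<le> y \<Longrightarrow> e * K - e\<^sup>2 * Q \<le> 0"
  shows "K \<le> 0"
proof (rule ccontr)
  assume "\<not> K \<le> 0"
  then have K: "K > 0" by simp
  have bound: "K \<le> e * Q" if "0 < e" "e \<le> y" for e
    using assms(2)[OF that] that(1) by (simp add: power2_eq_square mult.assoc)
  show False
  proof (cases "Q > 0")
    case True
    define e where "e = min y (K / (2 * Q))"
    have "0 < e" "e \<le> y" using assms(1) K True by (auto simp: e_def)
    moreover have "e * Q \<le> K / 2"
      using True by (simp add: e_def min_def field_simps split: if_splits)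
    ultimately show False using bound K by fastforce
  next
    case False
    then have "y * Q \<le> 0" using assms(1) mult_nonneg_nonpos[of y Q] by simp
    then show False using bound[of y] assms(1) K by simp
  qed
qed

lemma sum_fun_upd_column:
  fixes s :: "nat \<Rightarrow> nat \<Rightarrow> real"
  assumes "k \<in> {1..m}"
  shows "(\<Sum>i\<in>{1..m}. (s(k := si)) i l) = (\<Sum>i\<in>{1..m}. s i l) + (si l - s k l)"
proof -
  have "(\<Sum>i\<in>{1..m}. (s(k := si)) i l)
      = (\<Sum>i\<in>{1..m}. s i l + (if i = k then si l - s k l else 0))"
    by (rule sum.cong) auto
  then show ?thesis
    using assms by (simp add: sum.distrib)
qed

lemma rate_fun_upd:
  assumes "k \<in> {1..m}"
  shows "rate m d rmax rmin (s(k := si)) l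
       = rate m d rmax rmin s l - (rmax - rmin) * (si l - s k l) / d l"
  unfolding rate_def sum_fun_upd_column[OF assms] by (simp add: divide_inverse algebra_simps)

lemma utility_fun_upd_diff:
  assumes "k \<in> {1..m}"
  shows "utility m n d rmax rmin (s(k := si)) k - utility m n d rmax rmin s k
       = (\<Sum>l\<in>{1..n}. (si l - s k l) *
            (marginal_utility m d rmax rmin s k l - (rmax - rmin) * (si l - s k l) / d l))"
  unfolding utility_def sum_subtractf[symmetric]
  by (rule sum.cong)
     (simp_all add: rate_fun_upd[OF assms] marginal_utility_def divide_inverse algebra_simps)

lemma utility_shift_loan_diff:
  assumes k: "k \<in> {1..m}" and j: "j \<in> {1..n}" and j': "j' \<in> {1..n}" and "j \<noteq> j'"
  shows "utility m n d rmax rmin (shift_loan s k j j' e) k - utility m n d rmax rmin s k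
       = e * (marginal_utility m d rmax rmin s k j - marginal_utility m d rmax rmin s k j')
         - e\<^sup>2 * ((rmax - rmin) * (1 / d j + 1 / d j'))"
proof -
  define \<delta> where "\<delta> l = (if l = j then e else if l = j' then - e else 0)" for l
  define \<mu> where "\<mu> = marginal_utility m d rmax rmin s k"
  define g where "g l = \<delta> l * (\<mu> l - (rmax - rmin) * \<delta> l / d l)" for l
  have "((s k)(j := s k j + e, j' := s k j' - e)) l - s k l = \<delta> l" for l
    using \<open>j \<noteq> j'\<close> by (simp add: \<delta>_def)
  then have "utility m n d rmax rmin (shift_loan s k j j' e) k - utility m n d rmax rmin s k
      = (\<Sum>l\<in>{1..n}. g l)"
    by (simp add: shift_loan_def utility_fun_upd_diff[OF k] g_def \<mu>_def)
  also have "\<dots> = (\<Sum>l\<in>{1..n}. (if l = j then g j else 0) + (if l = j' then g j' else 0))"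
    using \<open>j \<noteq> j'\<close> by (intro sum.cong) (auto simp: g_def \<delta>_def)
  also have "\<dots> = g j + g j'"
    using j j' by (simp add: sum.distrib)
  also have "\<dots> = e * (\<mu> j - \<mu> j') - e\<^sup>2 * ((rmax - rmin) * (1 / d j + 1 / d j'))"
    using \<open>j \<noteq> j'\<close> by (simp add: g_def \<delta>_def power2_eq_square algebra_simps)
  finally show ?thesis by (simp add: \<mu>_def)
qed

lemma shift_loan_in_strategy_set:
  assumes "s k \<in> strategy_set n c k" and "j \<in> {1..n}" "j' \<in> {1..n}" "j \<noteq> j'"
    and "0 \<le> e" "e \<le> s k j'"
  shows "shift_loan s k j j' e k \<in> strategy_set n c k"
proof -
  let ?si = "(s k)(j := s k j + e, j' := s k j' - e)"
  have "(\<Sum>l\<in>{1..n}. ?si l)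
      = (\<Sum>l\<in>{1..n}. s k l + ((if l = j then e else 0) - (if l = j' then e else 0)))"
    by (rule sum.cong) (use \<open>j \<noteq> j'\<close> in auto)
  also have "\<dots> = (\<Sum>l\<in>{1..n}. s k l)"
    using assms(2,3) by (simp add: sum.distrib sum_subtractf)
  finally show ?thesis
    using assms by (auto simp: shift_loan_def strategy_set_def)
qed

lemma pure_NE_marginal_utility_le:
  assumes "pure_NE m n c d rmax rmin s"
    and "k \<in> {1..m}" "j \<in> {1..n}" "j' \<in> {1..n}" and "s k j' > 0"
  shows "marginal_utility m d rmax rmin s k j \<le> marginal_utility m d rmax rmin s k j'"
proof (cases "j = j'")
  case False
  have sk: "s k \<in> strategy_set n c k"
    using assms(1,2) by (auto simp: pure_NE_def profile_space_def)
  have "marginal_utility m d rmax rmin s k j - marginal_utility m d rmax rmin s k j' \<le> 0"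
  proof (rule linear_coeff_nonpos_if_quadratic_nonpos[OF \<open>s k j' > 0\<close>])
    fix e :: real assume "0 < e" "e \<le> s k j'"
    then have "shift_loan s k j j' e k \<in> strategy_set n c k"
      using shift_loan_in_strategy_set[of s k n c, OF sk assms(3,4) False] by simp
    then have "utility m n d rmax rmin (shift_loan s k j j' e) k \<le> utility m n d rmax rmin s k"
      using assms(1,2) unfolding pure_NE_def shift_loan_def by auto
    then show "e * (marginal_utility m d rmax rmin s k j - marginal_utility m d rmax rmin s k j')
        - e\<^sup>2 * ((rmax - rmin) * (1 / d j + 1 / d j')) \<le> 0"
      using utility_shift_loan_diff[OF assms(2-4) False, of d rmax rmin s e] by simp
  qed
  then show ?thesis by simp
qed simp

lemma pure_NE_rate_le:
  assumes G: "is_game m n c d rmax rmin" and NE: "pure_NE m n c d rmax rmin s"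
    and j: "j \<in> {1..n}" and j': "j' \<in> {1..n}"
  shows "rate m d rmax rmin s j \<le> rate m d rmax rmin s j'"
proof (rule ccontr)
  assume "\<not> ?thesis"
  then have less: "rate m d rmax rmin s j' < rate m d rmax rmin s j" by simp
  have a: "rmax - rmin > 0" and dj: "d j > 0"
    using G j by (auto simp: is_game_def)
  have nonneg: "s i l \<ge> 0" if "i \<in> {1..m}" "l \<in> {1..n}" for i l
    using NE that by (auto simp: pure_NE_def profile_space_def strategy_set_def)
  define X where "X l = (\<Sum>i\<in>{1..m}. s i l)" for l
  have "(rmax - rmin) * (X j / d j) < (rmax - rmin) * (X j' / d j')"
    using less unfolding rate_def X_def by (simp add: divide_inverse algebra_simps)
  then have load_less: "X j / d j < X j' / d j'"
    by (simp only: mult_less_cancel_left_pos[OF a])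
  have lender_less: "s k j' / d j' < s k j / d j" if k: "k \<in> {1..m}" and "s k j' > 0" for k
  proof -
    have "marginal_utility m d rmax rmin s k j \<le> marginal_utility m d rmax rmin s k j'"
      using pure_NE_marginal_utility_le[OF NE k j j' \<open>s k j' > 0\<close>] .
    then have "(rmax - rmin) * (s k j' / d j') < (rmax - rmin) * (s k j / d j)"
      using less by (simp add: marginal_utility_def)
    then show ?thesis by (simp only: mult_less_cancel_left_pos[OF a])
  qed
  have lender_le: "s k j' / d j' \<le> s k j / d j" if k: "k \<in> {1..m}" for k
  proof (cases "s k j' > 0")
    case False
    then have "s k j' = 0" using nonneg[OF k j'] by simp
    then show ?thesis using nonneg[OF k j] dj by simp
  qed (use lender_less k in force)
  have "\<exists>k\<in>{1..m}. s k j' > 0"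
  proof (rule ccontr)
    assume "\<not> (\<exists>k\<in>{1..m}. s k j' > 0)"
    then have "X j' = 0" using nonneg[OF _ j'] by (force simp: X_def intro: sum.neutral)
    moreover have "X j \<ge> 0" using nonneg[OF _ j] by (auto simp: X_def intro: sum_nonneg)
    ultimately show False using load_less dj by (simp add: divide_less_0_iff)
  qed
  then obtain k where k: "k \<in> {1..m}" "s k j' > 0" ..
  have "(\<Sum>i\<in>{1..m}. s i j' / d j') < (\<Sum>i\<in>{1..m}. s i j / d j)"
    using lender_le lender_less k by (intro sum_strict_mono_ex1) blast+
  then show False
    using load_less by (simp add: X_def sum_divide_distrib)
qed

theorem theorem3p5:
  fixes m n :: nat and c d :: "nat \<Rightarrow> real" and rmax rmin :: real
    and s :: "nat \<Rightarrow> nat \<Rightarrow> real"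
  assumes "is_game m n c d rmax rmin"
    and "pure_NE m n c d rmax rmin s"
    and "j \<in> {1..n}" and "j' \<in> {1..n}"
  shows "rate m d rmax rmin s j = rate m d rmax rmin s j'"
  using pure_NE_rate_le[OF assms] pure_NE_rate_le[OF assms(1,2,4,3)] by (rule antisym)

end
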